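(* Let $f:\mathbb{R}^2\to\mathbb{R}^2$ be a Topologically Anosov homeomorphism which is the time one map of a flow $(f_t)_{t\in\mathbb{R}}$ defined by a $C^1$ vector field on $\mathbb{R}^2$. Then the flow has no (non-stationary) periodic orbits and no finite connections.
   Context: A homeomorphism $f:\mathbb{R}^2\to\mathbb{R}^2$ is Topologically Anosov (TA) if: (i) there is a continuous strictly positive $\epsilon:\mathbb{R}^2\to\mathbb{R}$ such that for all $x\neq y$ there is $k\in\mathbb{Z}$ with $\|f^k(x)-f^k(y)\|>\epsilon(f^k(x))$; and (ii) for every continuous strictly positive $\epsilon$ there is a continuous strictly positive $\delta$ such that every $\delta$-pseudo-orbit is $\epsilon$-shadowed by an orbit. A $\delta$-pseudo-orbit is a sequence $(x_n)_{n\in\mathbb{Z}}$ with $\|f(x_n)-x_{n+1}\|<\delta(f(x_n))$; it is $\epsilon$-shadowed by the orbit of $x$ if $\|x_n-f^n(x)\|<\epsilon(x_n)$ for all $n$. A connection between singularities $x_1,x_2$ (not necessarily distinct) of the flow is an orbit of a point $x$ with $\alpha(x)=\{x_1\}$ and $\omega(x)=\{x_2\}$ (or vice versa); it is finite if $x_1,x_2\in\mathbb{R}^2$ (i.e. neither is the point at infinity of the extension of the flow to $\mathbb{S}^2=\mathbb{R}^2\cup\{\infty\}$). *)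

theory Defs
  imports "HOL-Analysis.Analysis"
begin

type_synonym R2 = "real ^ 2"

definition zpow :: "(R2 \<Rightarrow> R2) \<Rightarrow> int \<Rightarrow> R2 \<Rightarrow> R2" where
  "zpow f k = (if k \<ge> 0 then f ^^ nat k else (inv f) ^^ nat (- k))"

definition pos_cont :: "(R2 \<Rightarrow> real) \<Rightarrow> bool" where
  "pos_cont e \<longleftrightarrow> continuous_on UNIV e \<and> (\<forall>x. e x > 0)"

definition expansive_fun :: "(R2 \<Rightarrow> R2) \<Rightarrow> bool" where
  "expansive_fun f \<longleftrightarrow> (\<exists>e. pos_cont e \<and>
     (\<forall>x y. x \<noteq> y \<longrightarrow> (\<exists>k::int. norm (zpow f k x - zpow f k y) > e (zpow f k x))))"

definition pseudo_orbit :: "(R2 \<Rightarrow> R2) \<Rightarrow> (R2 \<Rightarrow> real) \<Rightarrow> (int \<Rightarrow> R2) \<Rightarrow> bool" where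
  "pseudo_orbit f d xs \<longleftrightarrow> (\<forall>n. norm (f (xs n) - xs (n + 1)) < d (f (xs n)))"

definition shadows :: "(R2 \<Rightarrow> R2) \<Rightarrow> (R2 \<Rightarrow> real) \<Rightarrow> (int \<Rightarrow> R2) \<Rightarrow> R2 \<Rightarrow> bool" where
  "shadows f e xs x \<longleftrightarrow> (\<forall>n. norm (xs n - zpow f n x) < e (xs n))"

definition shadowing :: "(R2 \<Rightarrow> R2) \<Rightarrow> bool" where
  "shadowing f \<longleftrightarrow> (\<forall>e. pos_cont e \<longrightarrow> (\<exists>d. pos_cont d \<and>
      (\<forall>xs. pseudo_orbit f d xs \<longrightarrow> (\<exists>x. shadows f e xs x))))"

definition topologically_anosov :: "(R2 \<Rightarrow> R2) \<Rightarrow> bool" where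
  "topologically_anosov f \<longleftrightarrow> (\<exists>g. homeomorphism UNIV UNIV f g) \<and> expansive_fun f \<and> shadowing f"

definition C1_field :: "(R2 \<Rightarrow> R2) \<Rightarrow> bool" where
  "C1_field V \<longleftrightarrow> (\<exists>V' :: R2 \<Rightarrow> R2 \<Rightarrow>\<^sub>L R2.
     (\<forall>x. (V has_derivative blinfun_apply (V' x)) (at x)) \<and> continuous_on UNIV V')"

definition is_flow_of :: "(real \<Rightarrow> R2 \<Rightarrow> R2) \<Rightarrow> (R2 \<Rightarrow> R2) \<Rightarrow> bool" where
  "is_flow_of phi V \<longleftrightarrow> (\<forall>x. phi 0 x = x) \<and> (\<forall>s t x. phi (s + t) x = phi s (phi t x)) \<and>
     (\<forall>x t. ((\<lambda>s. phi s x) has_vector_derivative V (phi t x)) (at t))"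

definition singularity :: "(R2 \<Rightarrow> R2) \<Rightarrow> R2 \<Rightarrow> bool" where
  "singularity V p \<longleftrightarrow> V p = 0"

definition periodic_orbit :: "(real \<Rightarrow> R2 \<Rightarrow> R2) \<Rightarrow> (R2 \<Rightarrow> R2) \<Rightarrow> R2 \<Rightarrow> bool" where
  "periodic_orbit phi V x \<longleftrightarrow> \<not> singularity V x \<and> (\<exists>T>0. phi T x = x)"

text \<open>Finite connection: the orbit of x has alpha-limit {x1} and omega-limit {x2} in the
  sphere R^2 \<union> {\<infinity>} with x1, x2 finite singularities, i.e. phi t x tends to x1 as t \<rightarrow> -\<infinity>
  and to x2 as t \<rightarrow> +\<infinity> (or vice versa; covered by the symmetric quantification).\<close>
definition finite_connection :: "(real \<Rightarrow> R2 \<Rightarrow> R2) \<Rightarrow> (R2 \<Rightarrow> R2) \<Rightarrow> R2 \<Rightarrow> bool" where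
  "finite_connection phi V x \<longleftrightarrow> \<not> singularity V x \<and>
     (\<exists>x1 x2. singularity V x1 \<and> singularity V x2 \<and>
        ((\<lambda>t. phi t x) \<longlongrightarrow> x1) at_bot \<and> ((\<lambda>t. phi t x) \<longlongrightarrow> x2) at_top)"

end

theory Submission
  imports Defs
begin

text \<open>
  A regular orbit that is periodic, or that connects two finite singularities, is bounded and
  is traversed uniformly continuously in time. So the continuous positive function \<open>e\<close> of
  expansivity is bounded below on it by some \<open>m > 0\<close>, and there is \<open>\<delta> > 0\<close> such that any two
  points of the orbit at flow-time distance below \<open>\<delta>\<close> are closer than \<open>m\<close>. Since \<open>V x \<noteq> 0\<close>,
  some \<open>phi s x\<close> with \<open>0 < s < \<delta>\<close> differs from \<open>x\<close>, yet \<open>f\<^sup>k x = phi k x\<close> and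
  \<open>f\<^sup>k (phi s x) = phi (k + s) x\<close> stay closer than \<open>m\<close> for every integer \<open>k\<close>, contradicting
  expansivity.
\<close>

lemma uniformly_continuous_on_UNIV_realI:
  fixes g :: "real \<Rightarrow> 'a::metric_space"
  assumes "\<And>\<epsilon>. \<epsilon> > 0 \<Longrightarrow> \<exists>\<delta>>0. \<forall>t s. 0 \<le> s \<longrightarrow> s < \<delta> \<longrightarrow> dist (g (t + s)) (g t) < \<epsilon>"
  shows "uniformly_continuous_on UNIV g"
  unfolding uniformly_continuous_on_def
proof (intro allI impI)
  fix \<epsilon> :: real
  assume "\<epsilon> > 0"
  then obtain \<delta> where "\<delta> > 0" and \<delta>: "\<And>t s. 0 \<le> s \<Longrightarrow> s < \<delta> \<Longrightarrow> dist (g (t + s)) (g t) < \<epsilon>"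
    using assms by blast
  have "dist (g t') (g t) < \<epsilon>" if "dist t' t < \<delta>" for t t'
  proof (cases "t \<le> t'")
    case True
    then show ?thesis using \<delta>[of "t' - t" t] that by (simp add: dist_real_def)
  next
    case False
    then show ?thesis using \<delta>[of "t - t'" t'] that by (simp add: dist_real_def dist_commute)
  qed
  with \<open>\<delta> > 0\<close> show "\<exists>\<delta>>0. \<forall>t\<in>UNIV. \<forall>t'\<in>UNIV. dist t' t < \<delta> \<longrightarrow> dist (g t') (g t) < \<epsilon>"
    by blast
qed

lemma periodic_add_int_multiple:
  assumes "\<And>t. g (t + T) = g (t :: real)"
  shows "g (t + of_int q * T) = g t"
proof (induction q arbitrary: t rule: int_induct[where k = 0])
  case base
  then show ?case by simp
next
  case (step1 i)
  then show ?case using assms[of "t + of_int i * T"] by (simp add: algebra_simps)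
next
  case (step2 i)
  then show ?case using step2.IH[of "t - T"] assms[of "t - T"] by (simp add: algebra_simps)
qed

lemma periodic_shift_into_period:
  assumes "T > 0" and "\<And>t. g (t + T) = g (t :: real)"
  obtains t0 where "t0 \<in> {0..T}" and "\<And>s. g (t + s) = g (t0 + s)"
proof
  define q where "q = \<lfloor>t / T\<rfloor>"
  show "t - of_int q * T \<in> {0..T}"
    using floor_divide_lower[OF \<open>T > 0\<close>, of t] floor_divide_upper[OF \<open>T > 0\<close>, of t]
    by (simp add: q_def algebra_simps)
  show "g (t + s) = g (t - of_int q * T + s)" for s
    using periodic_add_int_multiple[where g=g, OF assms(2), of "t - of_int q * T + s" q] by simp
qed

lemma bounded_range_periodic:
  fixes g :: "real \<Rightarrow> 'a::metric_space"
  assumes "continuous_on UNIV g" and "T > 0" and "\<And>t. g (t + T) = g t"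
  shows "bounded (range g)"
proof -
  have "range g \<subseteq> g ` {0..T}"
  proof
    fix y
    assume "y \<in> range g"
    then obtain t where "y = g t" by blast
    moreover obtain t0 where "t0 \<in> {0..T}" "g (t + 0) = g (t0 + 0)"
      using periodic_shift_into_period[where g=g, OF assms(2,3)] by metis
    ultimately show "y \<in> g ` {0..T}" by simp
  qed
  moreover have "compact (g ` {0..T})"
    using assms(1) by (intro compact_continuous_image) (auto intro: continuous_on_subset)
  ultimately show ?thesis by (meson bounded_subset compact_imp_bounded)
qed

lemma uniformly_continuous_on_periodic:
  fixes g :: "real \<Rightarrow> 'a::metric_space"
  assumes "continuous_on UNIV g" and "T > 0" and "\<And>t. g (t + T) = g t"
  shows "uniformly_continuous_on UNIV g"
proof (rule uniformly_continuous_on_UNIV_realI)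
  fix \<epsilon> :: real
  assume "\<epsilon> > 0"
  have "uniformly_continuous_on {0..2 * T} g"
    using assms(1) by (intro compact_uniformly_continuous) (auto intro: continuous_on_subset)
  then obtain d where "d > 0"
    and d: "\<forall>u\<in>{0..2 * T}. \<forall>v\<in>{0..2 * T}. dist v u < d \<longrightarrow> dist (g v) (g u) < \<epsilon>"
    unfolding uniformly_continuous_on_def using \<open>\<epsilon> > 0\<close> by metis
  have "dist (g (t + s)) (g t) < \<epsilon>" if "0 \<le> s" "s < min d T" for t s
  proof -
    obtain t0 where "t0 \<in> {0..T}" and shift: "\<And>s. g (t + s) = g (t0 + s)"
      using periodic_shift_into_period[where g=g, OF assms(2,3)] by metis
    then have "dist (g (t0 + s)) (g t0) < \<epsilon>"
      using d that by (auto simp: dist_real_def)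
    then show ?thesis using shift[of s] shift[of 0] by simp
  qed
  then show "\<exists>\<delta>>0. \<forall>t s. 0 \<le> s \<longrightarrow> s < \<delta> \<longrightarrow> dist (g (t + s)) (g t) < \<epsilon>"
    using \<open>d > 0\<close> \<open>T > 0\<close> by (intro exI[of _ "min d T"]) auto
qed

lemma bounded_range_convergent_at_infinity:
  fixes g :: "real \<Rightarrow> 'a::metric_space"
  assumes "continuous_on UNIV g" and "(g \<longlongrightarrow> a) at_bot" and "(g \<longlongrightarrow> b) at_top"
  shows "bounded (range g)"
proof -
  obtain A where A: "\<And>t. t \<le> A \<Longrightarrow> dist (g t) a < 1"
    using tendstoD[OF assms(2), of 1] by (auto simp: eventually_at_bot_linorder)
  obtain B where B: "\<And>t. t \<ge> B \<Longrightarrow> dist (g t) b < 1"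
    using tendstoD[OF assms(3), of 1] by (auto simp: eventually_at_top_linorder)
  have "g t \<in> ball a 1 \<union> g ` {A..B} \<union> ball b 1" for t
    using A[of t] B[of t] by (cases "t \<le> A"; cases "B \<le> t") (auto simp: dist_commute)
  then have "range g \<subseteq> ball a 1 \<union> g ` {A..B} \<union> ball b 1"
    by blast
  moreover have "compact (g ` {A..B})"
    using assms(1) by (intro compact_continuous_image) (auto intro: continuous_on_subset)
  ultimately show ?thesis by (meson bounded_Un bounded_ball bounded_subset compact_imp_bounded)
qed

lemma uniformly_continuous_on_convergent_at_infinity:
  fixes g :: "real \<Rightarrow> 'a::metric_space"
  assumes "continuous_on UNIV g" and "(g \<longlongrightarrow> a) at_bot" and "(g \<longlongrightarrow> b) at_top"
  shows "uniformly_continuous_on UNIV g"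
proof (rule uniformly_continuous_on_UNIV_realI)
  fix \<epsilon> :: real
  assume "\<epsilon> > 0"
  obtain A where A: "\<And>t. t \<le> A \<Longrightarrow> dist (g t) a < \<epsilon> / 2"
    using tendstoD[OF assms(2), of "\<epsilon> / 2"] \<open>\<epsilon> > 0\<close> by (auto simp: eventually_at_bot_linorder)
  obtain B where B: "\<And>t. t \<ge> B \<Longrightarrow> dist (g t) b < \<epsilon> / 2"
    using tendstoD[OF assms(3), of "\<epsilon> / 2"] \<open>\<epsilon> > 0\<close> by (auto simp: eventually_at_top_linorder)
  have "uniformly_continuous_on {A - 1..B + 1} g"
    using assms(1) by (intro compact_uniformly_continuous) (auto intro: continuous_on_subset)
  then obtain d where "d > 0"
    and d: "\<forall>u\<in>{A - 1..B + 1}. \<forall>v\<in>{A - 1..B + 1}. dist v u < d \<longrightarrow> dist (g v) (g u) < \<epsilon>"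
    unfolding uniformly_continuous_on_def using \<open>\<epsilon> > 0\<close> by metis
  have "dist (g (t + s)) (g t) < \<epsilon>" if "0 \<le> s" "s < min d 1" for t s
  proof -
    have "B \<le> t \<or> t + s \<le> A \<or> t \<in> {A - 1..B + 1} \<and> t + s \<in> {A - 1..B + 1}"
      using that by auto
    then consider "B \<le> t" | "t + s \<le> A" | "t \<in> {A - 1..B + 1}" "t + s \<in> {A - 1..B + 1}"
      by blast
    then show ?thesis
    proof cases
      case 1
      then show ?thesis using B[of t] B[of "t + s"] \<open>0 \<le> s\<close> dist_triangle_half_l by simp
    next
      case 2
      then show ?thesis using A[of t] A[of "t + s"] \<open>0 \<le> s\<close> dist_triangle_half_l by simp
    next
      case 3
      then show ?thesis using d that by (simp add: dist_real_def)
    qed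
  qed
  then show "\<exists>\<delta>>0. \<forall>t s. 0 \<le> s \<longrightarrow> s < \<delta> \<longrightarrow> dist (g (t + s)) (g t) < \<epsilon>"
    using \<open>d > 0\<close> by (intro exI[of _ "min d 1"]) auto
qed

lemma pos_cont_ge_const_on_bounded:
  assumes "pos_cont e" and "bounded S"
  obtains m where "m > 0" and "\<And>y. y \<in> S \<Longrightarrow> m \<le> e y"
proof (cases "S = {}")
  case True
  then show ?thesis using that[of 1] by simp
next
  case False
  have "compact (closure S)" and "continuous_on (closure S) e"
    using assms by (auto simp: pos_cont_def intro: continuous_on_subset)
  then obtain y0 where "\<And>y. y \<in> closure S \<Longrightarrow> e y0 \<le> e y"
    using continuous_attains_inf[of "closure S" e] False by auto
  then show ?thesis
    using that[of "e y0"] assms(1) closure_subset by (auto simp: pos_cont_def)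
qed

lemma flow_funpow:
  assumes "is_flow_of phi V"
  shows "phi c ^^ n = phi (c * real n)"
proof (induction n)
  case 0
  then show ?case using assms by (auto simp: is_flow_of_def fun_eq_iff)
next
  case (Suc n)
  have "phi (c * real (Suc n)) = phi c \<circ> phi (c * real n)"
    using assms by (auto simp: is_flow_of_def fun_eq_iff distrib_left add.commute)
  then show ?case using Suc by simp
qed

lemma flow_inverse:
  assumes "is_flow_of phi V"
  shows "inv (phi c) = phi (- c)"
proof (rule inv_unique_comp)
  show "phi c \<circ> phi (- c) = id"
    using assms unfolding is_flow_of_def by (metis add.right_inverse comp_apply eq_id_iff)
  show "phi (- c) \<circ> phi c = id"
    using assms unfolding is_flow_of_def by (metis add.left_inverse comp_apply eq_id_iff)
qed

lemma zpow_time_one_map: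
  assumes "is_flow_of phi V"
  shows "zpow (phi 1) k = phi (of_int k)"
  using flow_funpow[OF assms, where c=1 and n="nat k"] flow_funpow[OF assms, where c="-1" and n="nat (- k)"]
  by (simp add: zpow_def flow_inverse[OF assms] of_nat_nat)

lemma continuous_on_flow_orbit:
  assumes "is_flow_of phi V"
  shows "continuous_on S (\<lambda>t. phi t x)"
  using assms unfolding is_flow_of_def
  by (meson has_vector_derivative_continuous continuous_at_imp_continuous_on)

lemma flow_moves_regular_point:
  assumes flow: "is_flow_of phi V" and "V x \<noteq> 0" and "\<delta> > 0"
  shows "\<exists>s. 0 < s \<and> s \<le> \<delta> \<and> phi s x \<noteq> x"
proof (rule ccontr)
  assume "\<not> ?thesis"
  then have rest: "phi s x = x" if "s \<in> cbox 0 \<delta>" for s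
    using flow that by (cases "s = 0") (auto simp: is_flow_of_def)
  have "((\<lambda>s. phi s x) has_vector_derivative V (phi 0 x)) (at 0 within cbox 0 \<delta>)"
    using flow unfolding is_flow_of_def by (meson has_vector_derivative_at_within)
  then have flow_deriv: "((\<lambda>s. phi s x) has_vector_derivative V x) (at 0 within cbox 0 \<delta>)"
    using flow by (simp add: is_flow_of_def)
  have rest_deriv: "((\<lambda>s. phi s x) has_vector_derivative 0) (at 0 within cbox 0 \<delta>)"
    by (rule has_vector_derivative_transform_within[OF has_vector_derivative_const zero_less_one])
      (use rest \<open>\<delta> > 0\<close> in auto)
  have "V x = 0"
    using vector_derivative_unique_within_closed_interval[OF \<open>\<delta> > 0\<close> _ flow_deriv rest_deriv]
      \<open>\<delta> > 0\<close> by simp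
  with \<open>V x \<noteq> 0\<close> show False ..
qed

lemma expansive_flow_regular_orbit_not_bounded_uniformly_continuous:
  assumes flow: "is_flow_of phi V" and "expansive_fun (phi 1)" and "V x \<noteq> 0"
    and bounded: "bounded (range (\<lambda>t. phi t x))"
    and uniform: "uniformly_continuous_on UNIV (\<lambda>t. phi t x)"
  shows False
proof -
  obtain e where "pos_cont e" and separated: "\<And>y z. y \<noteq> z \<Longrightarrow>
      \<exists>k::int. norm (zpow (phi 1) k y - zpow (phi 1) k z) > e (zpow (phi 1) k y)"
    using assms(2) unfolding expansive_fun_def by blast
  obtain m where "m > 0" and "\<And>y. y \<in> range (\<lambda>t. phi t x) \<Longrightarrow> m \<le> e y"
    using pos_cont_ge_const_on_bounded[OF \<open>pos_cont e\<close> bounded] by blast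
  then have m: "m \<le> e (phi t x)" for t
    by simp
  from uniform \<open>m > 0\<close> obtain \<delta> where "\<delta> > 0"
    and \<delta>: "\<forall>t\<in>UNIV. \<forall>t'\<in>UNIV. dist t' t < \<delta> \<longrightarrow> dist (phi t' x) (phi t x) < m"
    unfolding uniformly_continuous_on_def by blast
  obtain s where "0 < s" "s \<le> \<delta> / 2" "phi s x \<noteq> x"
    using flow_moves_regular_point[OF flow \<open>V x \<noteq> 0\<close>, of "\<delta> / 2"] \<open>\<delta> > 0\<close> by auto
  then obtain k :: int where "norm (zpow (phi 1) k x - zpow (phi 1) k (phi s x)) > e (zpow (phi 1) k x)"
    using separated[of x "phi s x"] by auto
  moreover have "phi k (phi s x) = phi (k + s) x"
    using flow unfolding is_flow_of_def by metis
  moreover have "dist (phi (k + s) x) (phi k x) < m"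
    using \<delta> \<open>0 < s\<close> \<open>s \<le> \<delta> / 2\<close> by (simp add: dist_real_def)
  ultimately show False
    using m[of k] unfolding zpow_time_one_map[OF flow] by (simp add: dist_norm norm_minus_commute)
qed

theorem mainTheorem16:
  fixes f :: "R2 \<Rightarrow> R2" and phi :: "real \<Rightarrow> R2 \<Rightarrow> R2" and V :: "R2 \<Rightarrow> R2"
  assumes "C1_field V"
    and "is_flow_of phi V"
    and "f = phi 1"
    and "topologically_anosov f"
  shows "(\<nexists>x. periodic_orbit phi V x) \<and> (\<nexists>x. finite_connection phi V x)"
proof -
  note flow = assms(2)
  have expansive: "expansive_fun (phi 1)"
    using assms(3,4) by (simp add: topologically_anosov_def)
  note no_regular_orbit = expansive_flow_regular_orbit_not_bounded_uniformly_continuous[OF flow expansive]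
  have orbit: "continuous_on UNIV (\<lambda>t. phi t x)" for x
    by (rule continuous_on_flow_orbit[OF flow])
  have "\<not> periodic_orbit phi V x" for x
  proof
    assume "periodic_orbit phi V x"
    then obtain T where "V x \<noteq> 0" "T > 0" "phi T x = x"
      by (auto simp: periodic_orbit_def singularity_def)
    moreover have periodic: "phi (t + T) x = phi t x" for t
      using flow \<open>phi T x = x\<close> by (simp add: is_flow_of_def)
    ultimately show False
      using no_regular_orbit bounded_range_periodic[OF orbit _ periodic]
        uniformly_continuous_on_periodic[OF orbit _ periodic] by blast
  qed
  moreover have "\<not> finite_connection phi V x" for x
  proof
    assume "finite_connection phi V x"
    then obtain x1 x2 where "V x \<noteq> 0"
      and limits: "((\<lambda>t. phi t x) \<longlongrightarrow> x1) at_bot" "((\<lambda>t. phi t x) \<longlongrightarrow> x2) at_top"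
      by (auto simp: finite_connection_def singularity_def)
    then show False
      using no_regular_orbit bounded_range_convergent_at_infinity[OF orbit limits]
        uniformly_continuous_on_convergent_at_infinity[OF orbit limits] by blast
  qed
  ultimately show ?thesis by blast
qed

end
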